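(* Let $F$ be quadratic and assume (A1), (A2), (A4). Let $\mathbf C=1$ for \texttt{MCM} and $\mathbf C=N$ for \texttt{Rand-MCM} (as in the context), and $\widetilde g_k=\frac1N\sum_{i=1}^N\mathcal{C}_{\mathrm{up}}(g_k^i(\widehat w^i_{k-1}))$. Then for any $k\ge1$, almost surely, $$\mathbb{E}\Big[\Big\|\frac1N\sum_{i=1}^N\big(\mathcal{C}_{\mathrm{up}}(g_k^i(\widehat w^i_{k-1}))-\nabla F(\widehat w^i_{k-1})\big)\Big\|^2\,\Big|\,w_{k-1}\Big]\le\frac{\omega_{\mathrm{up}}}N\|\nabla F(w_{k-1})\|^2+\frac{\sigma^2(1+\omega_{\mathrm{up}})}{Nb}+\frac{\omega_{\mathrm{up}}\omega_{\mathrm{dwn}}L^2}{N}\cdot\frac1N\sum_{i=1}^N\|w_{k-1}-H^i_{k-2}\|^2,$$ $$\mathbb{E}\big[\|\widetilde g_k\|^2\,\big|\,w_{k-1}\big]\le\Big(1+\frac{\omega_{\mathrm{up}}}N\Big)\|\nabla F(w_{k-1})\|^2+\frac{\sigma^2(1+\omega_{\mathrm{up}})}{Nb}+L^2\omega_{\mathrm{dwn}}\Big(\frac1{\mathbf C}+\frac{\omega_{\mathrm{up}}}N\Big)\frac1N\sum_{i=1}^N\|w_{k-1}-H^i_{k-2}\|^2.$$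
   Context: $N\ge1$ homogeneous workers, objective $F:\mathbb{R}^d\to\mathbb{R}$, quadratic: $F(w)-F(w_* )=\frac12(w-w_* )^\top A(w-w_* )$ for a symmetric matrix $A$ and a point $w_*$. Worker $i$ at iteration $k$ has an oracle $g_k^i$ (mini-batch $b$) with $\mathbb{E}[g_k^i(w)]=\nabla F(w)$; all compressions and oracle calls use fresh, mutually independent randomness. \texttt{Rand-MCM} with step $\gamma$, rate $\alpha_{\mathrm{dwn}}$: $H^i_{-1}=w_0$, $\widehat w^i_0=w_0$; for $k\ge1$: $w_k=w_{k-1}-\gamma\widetilde g_k$, $\widehat w^i_k=H^i_{k-1}+\mathcal{C}_{\mathrm{dwn},i}(w_k-H^i_{k-1})$, $H^i_k=H^i_{k-1}+\alpha_{\mathrm{dwn}}\mathcal{C}_{\mathrm{dwn},i}(w_k-H^i_{k-1})$ (same realization), $\mathcal{C}_{\mathrm{dwn},i}$ mutually independent. \texttt{MCM}: same with one shared memory $H^i_k=H_k$ and one shared downlink compression, so $\widehat w^i_k=\widehat w_k$. $\mathbb{E}[\cdot\mid w_{k-1}]$: conditional expectation given all randomness up to the computation of $w_{k-1}$. (A1) for some $\omega_{\mathrm{up}},\omega_{\mathrm{dwn}}>0$, all $w$: $\mathbb{E}[\mathcal{C}(w)]=w$ and $\mathbb{E}\|\mathcal{C}(w)-w\|^2\le\omega\|w\|^2$ for uplink/downlink operators with the respective $\omega$. (A2) $F$ $L$-smooth. (A4) $\mathbb{E}\|g_k^i(w)-\nabla F(w)\|^2\le\sigma^2/b$. *)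

theory Defs
  imports "HOL-Probability.Probability"
begin

text \<open>Which of the two algorithms is run: MCM (one shared downlink compression
  and one shared memory) or Rand-MCM (independent downlink compressions and
  memories per worker).\<close>
datatype variant = MCM | Rand_MCM

definition random_operator :: "'s measure \<Rightarrow> ('s \<Rightarrow> real^'n \<Rightarrow> real^'n) \<Rightarrow> bool" where
  "random_operator P C \<longleftrightarrow> prob_space P \<and>
     (\<lambda>(s, x). C s x) \<in> borel_measurable (P \<Otimes>\<^sub>M borel)"

definition unbiased_compressor ::
    "'s measure \<Rightarrow> ('s \<Rightarrow> real^'n \<Rightarrow> real^'n) \<Rightarrow> real \<Rightarrow> bool" where
  "unbiased_compressor P C \<omega> \<longleftrightarrow> random_operator P C \<and>
     (\<forall>w. integrable P (\<lambda>s. C s w) \<and> (\<integral>s. C s w \<partial>P) = w \<and>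
          (\<integral>\<^sup>+s. ennreal ((norm (C s w - w))\<^sup>2) \<partial>P) \<le> ennreal (\<omega> * (norm w)\<^sup>2))"

text \<open>(A4): unbiased stochastic gradient oracle for the gradient G with variance
  bound v (= sigma^2 / b).\<close>
definition stoch_oracle ::
    "'s measure \<Rightarrow> ('s \<Rightarrow> real^'n \<Rightarrow> real^'n) \<Rightarrow> (real^'n \<Rightarrow> real^'n) \<Rightarrow> real \<Rightarrow> bool" where
  "stoch_oracle P g G v \<longleftrightarrow> random_operator P g \<and>
     (\<forall>w. integrable P (\<lambda>s. g s w) \<and> (\<integral>s. g s w \<partial>P) = G w \<and>
          (\<integral>\<^sup>+s. ennreal ((norm (g s w - G w))\<^sup>2) \<partial>P) \<le> ennreal v)"

definition is_quadratic :: "(real^'n \<Rightarrow> real) \<Rightarrow> real^'n^'n \<Rightarrow> real^'n \<Rightarrow> bool" where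
  "is_quadratic F A wst \<longleftrightarrow> transpose A = A \<and>
     (\<forall>w. F w - F wst = 1/2 * ((w - wst) \<bullet> (A *v (w - wst))))"

definition L_smooth :: "(real^'n \<Rightarrow> real) \<Rightarrow> real \<Rightarrow> bool" where
  "L_smooth F L \<longleftrightarrow> (\<exists>G. (\<forall>x. GDERIV F x :> G x) \<and>
     (\<forall>x y. norm (G x - G y) \<le> L * norm (x - y)))"

end

(*
  Everything rests on a Pythagorean identity.  Call a random vector Y orthogonal to
  constants if E|c + Y|^2 = |c|^2 + E|Y|^2 for every constant c.  Unbiased compression
  noise and unbiased sampling noise have this property; it survives scaling, adding a
  term that is centred conditionally on the randomness already used, and independent
  sums over the product space of the workers, and each of these steps adds second
  moments.  As F is quadratic, grad F is affine, so the downlink error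
  grad F(H + C(w - H)) - grad F(w) = A (C(w - H) - (w - H)) is again centred, with
  second moment at most L^2 omega_dwn |w - H|^2.

  The averaged update is kappa grad F(w) plus a sum of such terms: for Rand-MCM
  one independent centred term per worker, for MCM kappa times the gradient at the
  common estimate plus uplink terms that are independent and centred given the shared
  downlink compression.  Taking kappa = 0 and kappa = 1 yields the two bounds.
*)
theory Submission
  imports Defs
begin

section \<open>Random vectors orthogonal to constants\<close>

abbreviation second_moment :: "'a measure \<Rightarrow> ('a \<Rightarrow> 'v::real_normed_vector) \<Rightarrow> ennreal" where
  "second_moment M Y \<equiv> \<integral>\<^sup>+x. ennreal ((norm (Y x))\<^sup>2) \<partial>M"

text \<open>On a probability space and for square-integrable \<open>Y\<close> this says \<open>E Y = 0\<close>; in this form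
  it needs no integrability and composes directly with nonnegative integrals.\<close>
definition orthogonal_to_constants :: "'a measure \<Rightarrow> ('a \<Rightarrow> 'v::real_normed_vector) \<Rightarrow> bool" where
  "orthogonal_to_constants M Y \<longleftrightarrow>
    (\<forall>c. second_moment M (\<lambda>x. c + Y x) = ennreal ((norm c)\<^sup>2) + second_moment M Y)"

lemma orthogonal_to_constantsD:
  "orthogonal_to_constants M Y \<Longrightarrow>
    second_moment M (\<lambda>x. c + Y x) = ennreal ((norm c)\<^sup>2) + second_moment M Y"
  by (simp add: orthogonal_to_constants_def)

lemma orthogonal_to_constants_centered:
  fixes f :: "'a \<Rightarrow> 'v::euclidean_space"
  assumes "prob_space M" and [measurable]: "f \<in> borel_measurable M" and f_int: "integrable M f"
    and finite: "second_moment M (\<lambda>x. f x - integral\<^sup>L M f) < \<infinity>"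
  shows "orthogonal_to_constants M (\<lambda>x. f x - integral\<^sup>L M f)"
  unfolding orthogonal_to_constants_def
proof
  interpret prob_space M by fact
  fix c :: 'v
  define Y where "Y = (\<lambda>x. f x - integral\<^sup>L M f)"
  have Y_int: "integrable M Y" and Y_mean: "integral\<^sup>L M Y = 0"
    using f_int by (simp_all add: Y_def prob_space)
  have Y_sq_int: "integrable M (\<lambda>x. (norm (Y x))\<^sup>2)"
    using finite by (intro integrableI_bounded) (auto simp: Y_def less_top)
  have expand: "(norm (c + Y x))\<^sup>2 = (norm c)\<^sup>2 + 2 * inner c (Y x) + (norm (Y x))\<^sup>2" for x
    by (simp add: power2_norm_eq_inner inner_add_left inner_add_right inner_commute)
  have "(\<integral>x. (norm (c + Y x))\<^sup>2 \<partial>M) =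
      (norm c)\<^sup>2 + 2 * inner c (integral\<^sup>L M Y) + (\<integral>x. (norm (Y x))\<^sup>2 \<partial>M)"
    unfolding expand using Y_int Y_sq_int by (simp add: prob_space)
  moreover have "integrable M (\<lambda>x. (norm (c + Y x))\<^sup>2)"
    unfolding expand using Y_int Y_sq_int by auto
  ultimately show "second_moment M (\<lambda>x. c + Y x) = ennreal ((norm c)\<^sup>2) + second_moment M Y"
    using Y_sq_int Y_mean by (simp add: nn_integral_eq_integral)
qed

lemma second_moment_scaleR:
  fixes Y :: "'a \<Rightarrow> 'v::euclidean_space"
  assumes "Y \<in> borel_measurable M"
  shows "second_moment M (\<lambda>x. r *\<^sub>R Y x) = ennreal (r\<^sup>2) * second_moment M Y"
proof -
  have "second_moment M (\<lambda>x. r *\<^sub>R Y x) = (\<integral>\<^sup>+x. ennreal (r\<^sup>2) * ennreal ((norm (Y x))\<^sup>2) \<partial>M)"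
    by (simp add: power_mult_distrib ennreal_mult)
  also have "\<dots> = ennreal (r\<^sup>2) * second_moment M Y"
    using assms by (intro nn_integral_cmult) measurable
  finally show ?thesis .
qed

lemma orthogonal_to_constants_scaleR:
  fixes Y :: "'a \<Rightarrow> 'v::euclidean_space"
  assumes "prob_space M" and Y_meas: "Y \<in> borel_measurable M" and Y: "orthogonal_to_constants M Y"
  shows "orthogonal_to_constants M (\<lambda>x. r *\<^sub>R Y x)"
proof (cases "r = 0")
  case True
  then show ?thesis
    using assms by (simp add: orthogonal_to_constants_def prob_space.emeasure_space_1)
next
  case False
  show ?thesis unfolding orthogonal_to_constants_def
  proof
    fix c :: 'v
    have "c + r *\<^sub>R Y x = r *\<^sub>R (c /\<^sub>R r + Y x)" for x
      using False by (simp add: scaleR_add_right)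
    then have "second_moment M (\<lambda>x. c + r *\<^sub>R Y x)
        = ennreal (r\<^sup>2) * (ennreal ((norm (c /\<^sub>R r))\<^sup>2) + second_moment M Y)"
      using second_moment_scaleR[of "\<lambda>x. c /\<^sub>R r + Y x" M r] Y_meas orthogonal_to_constantsD[OF Y]
      by simp
    also have "\<dots> = ennreal (r\<^sup>2) * ennreal ((norm (c /\<^sub>R r))\<^sup>2) + ennreal (r\<^sup>2) * second_moment M Y"
      by (simp add: distrib_left)
    also have "ennreal (r\<^sup>2) * ennreal ((norm (c /\<^sub>R r))\<^sup>2) = ennreal ((norm c)\<^sup>2)"
      using False by (simp add: ennreal_mult[symmetric] power_mult_distrib power_inverse)
    also have "ennreal (r\<^sup>2) * second_moment M Y = second_moment M (\<lambda>x. r *\<^sub>R Y x)"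
      by (rule second_moment_scaleR[OF Y_meas, symmetric])
    finally show "second_moment M (\<lambda>x. c + r *\<^sub>R Y x) =
        ennreal ((norm c)\<^sup>2) + second_moment M (\<lambda>x. r *\<^sub>R Y x)" .
  qed
qed

lemma second_moment_add_conditionally_centered:
  fixes Z :: "'a \<Rightarrow> 'v::euclidean_space"
  assumes "sigma_finite_measure M2"
    and [measurable]: "Z \<in> borel_measurable M1" "case_prod E \<in> borel_measurable (M1 \<Otimes>\<^sub>M M2)"
    and E: "\<And>x. x \<in> space M1 \<Longrightarrow> orthogonal_to_constants M2 (E x)"
  shows "second_moment (M1 \<Otimes>\<^sub>M M2) (\<lambda>z. Z (fst z) + E (fst z) (snd z)) =
    second_moment M1 Z + (\<integral>\<^sup>+x. second_moment M2 (E x) \<partial>M1)"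
proof -
  interpret M2: sigma_finite_measure M2 by fact
  have "second_moment (M1 \<Otimes>\<^sub>M M2) (\<lambda>z. Z (fst z) + E (fst z) (snd z)) =
      (\<integral>\<^sup>+x. second_moment M2 (\<lambda>y. Z x + E x y) \<partial>M1)"
    by (subst M2.nn_integral_fst[symmetric]) auto
  also have "\<dots> = (\<integral>\<^sup>+x. ennreal ((norm (Z x))\<^sup>2) + second_moment M2 (E x) \<partial>M1)"
    using E by (intro nn_integral_cong) (simp add: orthogonal_to_constantsD)
  also have "\<dots> = second_moment M1 Z + (\<integral>\<^sup>+x. second_moment M2 (E x) \<partial>M1)"
    by (intro nn_integral_add) measurable
  finally show ?thesis .
qed

lemma orthogonal_to_constants_pair:
  fixes Z :: "'a \<Rightarrow> 'v::euclidean_space"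
  assumes "sigma_finite_measure M2"
    and [measurable]: "Z \<in> borel_measurable M1" "case_prod E \<in> borel_measurable (M1 \<Otimes>\<^sub>M M2)"
    and Z: "orthogonal_to_constants M1 Z"
    and E: "\<And>x. x \<in> space M1 \<Longrightarrow> orthogonal_to_constants M2 (E x)"
  shows "orthogonal_to_constants (M1 \<Otimes>\<^sub>M M2) (\<lambda>z. Z (fst z) + E (fst z) (snd z))"
  unfolding orthogonal_to_constants_def
proof
  fix c :: 'v
  have "second_moment (M1 \<Otimes>\<^sub>M M2) (\<lambda>z. c + (Z (fst z) + E (fst z) (snd z))) =
      second_moment M1 (\<lambda>x. c + Z x) + (\<integral>\<^sup>+x. second_moment M2 (E x) \<partial>M1)"
    using second_moment_add_conditionally_centered[of M2 "\<lambda>x. c + Z x" M1 E] assms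
    by (simp add: add.assoc)
  then show "second_moment (M1 \<Otimes>\<^sub>M M2) (\<lambda>z. c + (Z (fst z) + E (fst z) (snd z))) =
      ennreal ((norm c)\<^sup>2) + second_moment (M1 \<Otimes>\<^sub>M M2) (\<lambda>z. Z (fst z) + E (fst z) (snd z))"
    using second_moment_add_conditionally_centered[OF assms(1-3) E] orthogonal_to_constantsD[OF Z]
    by (simp add: add.assoc)
qed

lemma orthogonal_to_constants_snd:
  fixes F :: "'b \<Rightarrow> 'v::euclidean_space"
  assumes "prob_space M1" "sigma_finite_measure M2"
    and [measurable]: "F \<in> borel_measurable M2" and F: "orthogonal_to_constants M2 F"
  shows "orthogonal_to_constants (M1 \<Otimes>\<^sub>M M2) (\<lambda>z. F (snd z))"
    and "second_moment (M1 \<Otimes>\<^sub>M M2) (\<lambda>z. F (snd z)) = second_moment M2 F"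
proof -
  interpret M1: prob_space M1 by fact
  have zero: "orthogonal_to_constants M1 (\<lambda>_. 0::'v)"
    by (simp add: orthogonal_to_constants_def M1.emeasure_space_1)
  show "orthogonal_to_constants (M1 \<Otimes>\<^sub>M M2) (\<lambda>z. F (snd z))"
    using orthogonal_to_constants_pair[OF assms(2) _ _ zero, of "\<lambda>_. F"] F by simp
  show "second_moment (M1 \<Otimes>\<^sub>M M2) (\<lambda>z. F (snd z)) = second_moment M2 F"
    using second_moment_add_conditionally_centered[OF assms(2), of "\<lambda>_. 0" M1 "\<lambda>_. F"] F
    by (simp add: M1.emeasure_space_1)
qed

lemma nn_integral_PiM_split:
  assumes "finite I" and "i \<in> I" and M: "\<And>j. j \<in> I \<Longrightarrow> prob_space (M j)"
    and f: "f \<in> borel_measurable (PiM I M)"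
  shows "(\<integral>\<^sup>+\<xi>. f \<xi> \<partial>PiM I M) = (\<integral>\<^sup>+y. \<integral>\<^sup>+\<xi>. f (\<xi>(i := y)) \<partial>PiM (I - {i}) M \<partial>M i)"
proof -
  \<comment> \<open>The locale \<open>product_prob_space\<close> wants a probability space at every index, also outside \<open>I\<close>.\<close>
  define M' where "M' j = (if j \<in> I then M j else return (count_space UNIV) undefined)" for j
  interpret product_prob_space M'
    using M by (simp add: M'_def product_prob_space_def product_prob_space_axioms_def
        product_sigma_finite_def prob_space_imp_sigma_finite prob_space_return)
  have PiM_M': "PiM J M' = PiM J M" if "J \<subseteq> I" for J
    using that by (intro PiM_cong) (auto simp: M'_def)
  have I_eq: "insert i (I - {i}) = I" "insert i I = I" using \<open>i \<in> I\<close> by blast+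
  have "(\<integral>\<^sup>+\<xi>. f \<xi> \<partial>PiM (insert i (I - {i})) M') =
      (\<integral>\<^sup>+y. \<integral>\<^sup>+\<xi>. f (\<xi>(i := y)) \<partial>PiM (I - {i}) M' \<partial>M' i)"
    using f \<open>finite I\<close> by (intro product_nn_integral_insert_rev) (auto simp: I_eq PiM_M')
  then show ?thesis using \<open>i \<in> I\<close> by (simp add: I_eq PiM_M' M'_def)
qed

lemma second_moment_sum_PiM:
  fixes Y :: "'i \<Rightarrow> 'a \<Rightarrow> 'v::euclidean_space"
  assumes "finite I" and "\<And>i. i \<in> I \<Longrightarrow> prob_space (M i)"
    and "\<And>i. i \<in> I \<Longrightarrow> Y i \<in> borel_measurable (M i)"
    and "\<And>i. i \<in> I \<Longrightarrow> orthogonal_to_constants (M i) (Y i)"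
  shows "second_moment (PiM I M) (\<lambda>\<xi>. c + (\<Sum>i\<in>I. Y i (\<xi> i))) =
    ennreal ((norm c)\<^sup>2) + (\<Sum>i\<in>I. second_moment (M i) (Y i))"
  using assms
proof (induction I arbitrary: c rule: finite_induct)
  case empty
  then show ?case by (simp add: PiM_empty nn_integral_count_space_finite)
next
  case (insert k I)
  interpret Mk: prob_space "M k" using insert.prems(1) by blast
  have [measurable]: "Y i \<in> borel_measurable (M i)" if "i \<in> insert k I" for i
    using insert.prems(2) that .
  have "(\<Sum>i\<in>insert k I. Y i ((\<xi>(k := y)) i)) = Y k y + (\<Sum>i\<in>I. Y i (\<xi> i))" for \<xi> y
    using insert.hyps by (auto intro!: sum.cong)
  then have "second_moment (PiM (insert k I) M) (\<lambda>\<xi>. c + (\<Sum>i\<in>insert k I. Y i (\<xi> i))) =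
      (\<integral>\<^sup>+y. second_moment (PiM I M) (\<lambda>\<xi>. (c + Y k y) + (\<Sum>i\<in>I. Y i (\<xi> i))) \<partial>M k)"
    using insert.hyps insert.prems(1)
    by (subst nn_integral_PiM_split[of _ k]) (simp_all add: add.assoc)
  also have "\<dots> = (\<integral>\<^sup>+y. ennreal ((norm (c + Y k y))\<^sup>2) + (\<Sum>i\<in>I. second_moment (M i) (Y i)) \<partial>M k)"
    using insert.IH insert.prems by (intro nn_integral_cong) simp
  also have "\<dots> = ennreal ((norm c)\<^sup>2) + second_moment (M k) (Y k) + (\<Sum>i\<in>I. second_moment (M i) (Y i))"
    using insert.prems(3)
    by (simp add: nn_integral_add Mk.emeasure_space_1 orthogonal_to_constantsD)
  finally show ?case using insert.hyps by (simp add: add.assoc)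
qed

lemma second_moment_sum_PiM_snd:
  fixes F :: "'i \<Rightarrow> 'q \<Rightarrow> 'v::euclidean_space"
  assumes "finite I"
    and D: "\<And>i. i \<in> I \<Longrightarrow> prob_space (D i)" and Q: "\<And>i. i \<in> I \<Longrightarrow> prob_space (Q i)"
    and F_meas: "\<And>i. i \<in> I \<Longrightarrow> F i \<in> borel_measurable (Q i)"
    and F: "\<And>i. i \<in> I \<Longrightarrow> orthogonal_to_constants (Q i) (F i)"
  shows "second_moment (PiM I (\<lambda>i. D i \<Otimes>\<^sub>M Q i)) (\<lambda>\<xi>. c + (\<Sum>i\<in>I. F i (snd (\<xi> i)))) =
    ennreal ((norm c)\<^sup>2) + (\<Sum>i\<in>I. second_moment (Q i) (F i))"
proof -
  note snd = orthogonal_to_constants_snd[OF D prob_space_imp_sigma_finite[OF Q] F_meas F]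
  have "second_moment (PiM I (\<lambda>i. D i \<Otimes>\<^sub>M Q i)) (\<lambda>\<xi>. c + (\<Sum>i\<in>I. F i (snd (\<xi> i)))) =
      ennreal ((norm c)\<^sup>2) + (\<Sum>i\<in>I. second_moment (D i \<Otimes>\<^sub>M Q i) (\<lambda>z. F i (snd z)))"
    using assms snd(1) by (intro second_moment_sum_PiM) (auto intro: prob_space_pair)
  also have "\<dots> = ennreal ((norm c)\<^sup>2) + (\<Sum>i\<in>I. second_moment (Q i) (F i))"
    using snd(2) by simp
  finally show ?thesis .
qed

lemma measurable_shared_coordinate_sum:
  fixes a :: "'d \<Rightarrow> 'v::euclidean_space" and Y :: "'i \<Rightarrow> 'd \<Rightarrow> 'q \<Rightarrow> 'v"
  assumes "i0 \<in> I" and [measurable]: "a \<in> borel_measurable (D i0)"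
    and Y_meas: "\<And>i. i \<in> I \<Longrightarrow> case_prod (Y i) \<in> borel_measurable (D i0 \<Otimes>\<^sub>M Q i)"
  shows "(\<lambda>\<xi>. a (fst (\<xi> i0)) + (\<Sum>i\<in>I. Y i (fst (\<xi> i0)) (snd (\<xi> i))))
    \<in> borel_measurable (PiM I (\<lambda>i. D i \<Otimes>\<^sub>M Q i))"
proof -
  have component: "(\<lambda>\<xi>. \<xi> i) \<in> PiM I (\<lambda>i. D i \<Otimes>\<^sub>M Q i) \<rightarrow>\<^sub>M D i \<Otimes>\<^sub>M Q i" if "i \<in> I" for i
    using measurable_component_singleton[OF that, of "\<lambda>i. D i \<Otimes>\<^sub>M Q i"] by simp
  have pair: "(\<lambda>\<xi>. (fst (\<xi> i0), snd (\<xi> i))) \<in> PiM I (\<lambda>i. D i \<Otimes>\<^sub>M Q i) \<rightarrow>\<^sub>M D i0 \<Otimes>\<^sub>M Q i"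
    if "i \<in> I" for i
    using component[OF \<open>i0 \<in> I\<close>] component[OF that] by measurable
  have terms: "(\<lambda>\<xi>. Y i (fst (\<xi> i0)) (snd (\<xi> i))) \<in> borel_measurable (PiM I (\<lambda>i. D i \<Otimes>\<^sub>M Q i))"
    if "i \<in> I" for i
    using measurable_compose[OF pair[OF that] Y_meas[OF that]] by simp
  have "(\<lambda>\<xi>. a (fst (\<xi> i0))) \<in> borel_measurable (PiM I (\<lambda>i. D i \<Otimes>\<^sub>M Q i))"
    using component[OF \<open>i0 \<in> I\<close>] by measurable
  then show ?thesis by (rule borel_measurable_add[OF _ borel_measurable_sum[OF terms]])
qed

lemma second_moment_sum_PiM_shared:
  fixes a :: "'d \<Rightarrow> 'v::euclidean_space" and Y :: "'i \<Rightarrow> 'd \<Rightarrow> 'q \<Rightarrow> 'v"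
  assumes "finite I" and "i0 \<in> I"
    and D: "\<And>i. i \<in> I \<Longrightarrow> prob_space (D i)" and Q: "\<And>i. i \<in> I \<Longrightarrow> prob_space (Q i)"
    and a_meas[measurable]: "a \<in> borel_measurable (D i0)"
    and Y_meas: "\<And>i. i \<in> I \<Longrightarrow> case_prod (Y i) \<in> borel_measurable (D i0 \<Otimes>\<^sub>M Q i)"
    and Y: "\<And>i x. i \<in> I \<Longrightarrow> x \<in> space (D i0) \<Longrightarrow> orthogonal_to_constants (Q i) (Y i x)"
  shows "second_moment (PiM I (\<lambda>i. D i \<Otimes>\<^sub>M Q i))
      (\<lambda>\<xi>. a (fst (\<xi> i0)) + (\<Sum>i\<in>I. Y i (fst (\<xi> i0)) (snd (\<xi> i)))) =
    (\<integral>\<^sup>+x. ennreal ((norm (a x))\<^sup>2) + (\<Sum>i\<in>I. second_moment (Q i) (Y i x)) \<partial>D i0)"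
proof -
  define J where "J = I - {i0}"
  have I_eq: "I = insert i0 J" and "i0 \<notin> J" and "finite J"
    using assms(1,2) by (auto simp: J_def)
  interpret Q0: prob_space "Q i0" using Q \<open>i0 \<in> I\<close> .
  have [measurable]: "case_prod (Y i0) \<in> borel_measurable (D i0 \<Otimes>\<^sub>M Q i0)"
    using Y_meas \<open>i0 \<in> I\<close> .
  note [measurable] =
    measurable_shared_coordinate_sum[where D = D and Q = Q and Y = Y, OF \<open>i0 \<in> I\<close> a_meas Y_meas]
  define S where "S x = (\<Sum>j\<in>J. second_moment (Q j) (Y j x))" for x
  have [measurable]: "S \<in> borel_measurable (D i0)"
    unfolding S_def using Y_meas Q
    by (intro borel_measurable_sum sigma_finite_measure.borel_measurable_nn_integral)
      (auto simp: I_eq intro: prob_space_imp_sigma_finite)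
  have "(\<Sum>i\<in>I. Y i (fst ((\<xi>(i0 := z)) i0)) (snd ((\<xi>(i0 := z)) i))) =
      Y i0 (fst z) (snd z) + (\<Sum>j\<in>J. Y j (fst z) (snd (\<xi> j)))" for \<xi> z
    using \<open>finite J\<close> \<open>i0 \<notin> J\<close> by (auto simp: I_eq intro!: sum.cong)
  then have "second_moment (PiM I (\<lambda>i. D i \<Otimes>\<^sub>M Q i))
      (\<lambda>\<xi>. a (fst (\<xi> i0)) + (\<Sum>i\<in>I. Y i (fst (\<xi> i0)) (snd (\<xi> i)))) =
      (\<integral>\<^sup>+z. second_moment (PiM J (\<lambda>i. D i \<Otimes>\<^sub>M Q i))
        (\<lambda>\<xi>. (a (fst z) + Y i0 (fst z) (snd z)) + (\<Sum>j\<in>J. Y j (fst z) (snd (\<xi> j)))) \<partial>(D i0 \<Otimes>\<^sub>M Q i0))"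
    using assms(1,2) D Q
    by (subst nn_integral_PiM_split[of _ i0]) (auto simp: J_def add.assoc prob_space_pair)
  also have "\<dots> = (\<integral>\<^sup>+z. ennreal ((norm (a (fst z) + Y i0 (fst z) (snd z)))\<^sup>2) + S (fst z)
      \<partial>(D i0 \<Otimes>\<^sub>M Q i0))"
    unfolding S_def using \<open>finite J\<close> D Q Y_meas Y
    by (intro nn_integral_cong second_moment_sum_PiM_snd) (auto simp: I_eq space_pair_measure)
  also have "\<dots> = (\<integral>\<^sup>+x. \<integral>\<^sup>+y. ennreal ((norm (a x + Y i0 x y))\<^sup>2) + S x \<partial>Q i0 \<partial>D i0)"
    by (subst Q0.nn_integral_fst[symmetric]) auto
  also have "\<dots> = (\<integral>\<^sup>+x. ennreal ((norm (a x))\<^sup>2) + second_moment (Q i0) (Y i0 x) + S x \<partial>D i0)"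
    using Y[OF \<open>i0 \<in> I\<close>]
    by (intro nn_integral_cong)
      (simp add: nn_integral_add Q0.emeasure_space_1 orthogonal_to_constantsD)
  finally show ?thesis
    using \<open>finite J\<close> \<open>i0 \<notin> J\<close> by (simp add: I_eq S_def add.assoc)
qed

lemma (in prob_space) nn_integral_affine_le:
  assumes [measurable]: "f \<in> borel_measurable M" and "\<And>x. 0 \<le> f x"
    and "0 \<le> a" and "0 \<le> b" and "0 \<le> B"
    and le: "(\<integral>\<^sup>+x. ennreal (f x) \<partial>M) \<le> ennreal B"
  shows "(\<integral>\<^sup>+x. ennreal (a * f x + b) \<partial>M) \<le> ennreal (a * B + b)"
proof -
  have "(\<integral>\<^sup>+x. ennreal (a * f x + b) \<partial>M) = ennreal a * (\<integral>\<^sup>+x. ennreal (f x) \<partial>M) + ennreal b"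
    using assms by (simp add: ennreal_mult nn_integral_add nn_integral_cmult emeasure_space_1)
  also have "\<dots> \<le> ennreal a * ennreal B + ennreal b"
    using le by (intro add_right_mono mult_left_mono) auto
  also have "\<dots> = ennreal (a * B + b)"
    using assms by (simp add: ennreal_mult)
  finally show ?thesis .
qed

section \<open>Compression and sampling noise\<close>

lemma unbiased_compressorD:
  assumes "unbiased_compressor P C \<omega>"
  shows "prob_space P" and "(\<lambda>(s, x). C s x) \<in> borel_measurable (P \<Otimes>\<^sub>M borel)"
    and "integrable P (\<lambda>s. C s x)" and "(\<integral>s. C s x \<partial>P) = x"
    and "second_moment P (\<lambda>s. C s x - x) \<le> ennreal (\<omega> * (norm x)\<^sup>2)"
  using assms by (auto simp: unbiased_compressor_def random_operator_def)

lemma stoch_oracleD: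
  assumes "stoch_oracle P g G v"
  shows "prob_space P" and "(\<lambda>(s, x). g s x) \<in> borel_measurable (P \<Otimes>\<^sub>M borel)"
    and "integrable P (\<lambda>s. g s x)" and "(\<integral>s. g s x \<partial>P) = G x"
    and "second_moment P (\<lambda>s. g s x - G x) \<le> ennreal v"
  using assms by (auto simp: stoch_oracle_def random_operator_def)

lemma compressed_oracle_noise:
  fixes C :: "'u \<Rightarrow> real^'n \<Rightarrow> real^'n" and g :: "'g \<Rightarrow> real^'n \<Rightarrow> real^'n"
  assumes C: "unbiased_compressor Pu C \<omega>" and g: "stoch_oracle Pg g G v"
    and "0 \<le> \<omega>" and "0 \<le> v"
  shows "orthogonal_to_constants (Pg \<Otimes>\<^sub>M Pu) (\<lambda>z. C (snd z) (g (fst z) x) - G x)"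
    and "second_moment (Pg \<Otimes>\<^sub>M Pu) (\<lambda>z. C (snd z) (g (fst z) x) - G x)
      \<le> ennreal (\<omega> * (norm (G x))\<^sup>2 + (1 + \<omega>) * v)"
proof -
  note [measurable] = unbiased_compressorD(2)[OF C] stoch_oracleD(2)[OF g]
  interpret Pu: prob_space Pu by (rule unbiased_compressorD(1)[OF C])
  have sampling_noise: "orthogonal_to_constants Pg (\<lambda>s. g s x - G x)"
    using orthogonal_to_constants_centered[of Pg "\<lambda>s. g s x"]
      stoch_oracleD(1)[OF g] stoch_oracleD(3-5)[OF g, where x = x]
    by (simp add: le_less_trans)
  have compression_noise: "orthogonal_to_constants Pu (\<lambda>u. C u (g s x) - g s x)" for s
    using orthogonal_to_constants_centered[of Pu "\<lambda>u. C u (g s x)"]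
      unbiased_compressorD(1)[OF C] unbiased_compressorD(3-5)[OF C, where x = "g s x"]
    by (simp add: le_less_trans)
  have split: "C (snd z) (g (fst z) x) - G x =
      (g (fst z) x - G x) + (C (snd z) (g (fst z) x) - g (fst z) x)" for z
    by simp
  show "orthogonal_to_constants (Pg \<Otimes>\<^sub>M Pu) (\<lambda>z. C (snd z) (g (fst z) x) - G x)"
    unfolding split
    by (rule orthogonal_to_constants_pair[OF Pu.sigma_finite_measure_axioms _ _
          sampling_noise compression_noise]) measurable
  have "second_moment (Pg \<Otimes>\<^sub>M Pu) (\<lambda>z. C (snd z) (g (fst z) x) - G x) =
      second_moment Pg (\<lambda>s. g s x - G x) + (\<integral>\<^sup>+s. second_moment Pu (\<lambda>u. C u (g s x) - g s x) \<partial>Pg)"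
    unfolding split
    by (rule second_moment_add_conditionally_centered[OF Pu.sigma_finite_measure_axioms _ _
          compression_noise]) measurable
  also have "\<dots> \<le> ennreal v + (\<integral>\<^sup>+s. ennreal \<omega> * ennreal ((norm (g s x))\<^sup>2) \<partial>Pg)"
    using stoch_oracleD(5)[OF g] unbiased_compressorD(5)[OF C] \<open>0 \<le> \<omega>\<close>
    by (intro add_mono nn_integral_mono) (simp_all add: ennreal_mult)
  also have "(\<integral>\<^sup>+s. ennreal \<omega> * ennreal ((norm (g s x))\<^sup>2) \<partial>Pg) =
      ennreal \<omega> * (ennreal ((norm (G x))\<^sup>2) + second_moment Pg (\<lambda>s. g s x - G x))"
    using orthogonal_to_constantsD[OF sampling_noise, of "G x"] by (simp add: nn_integral_cmult)
  also have "ennreal v + \<dots> \<le> ennreal v + ennreal \<omega> * (ennreal ((norm (G x))\<^sup>2) + ennreal v)"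
    using stoch_oracleD(5)[OF g] by (intro add_mono mult_left_mono) auto
  also have "\<dots> = ennreal (v + \<omega> * ((norm (G x))\<^sup>2 + v))"
    using \<open>0 \<le> \<omega>\<close> \<open>0 \<le> v\<close> by (simp add: ennreal_mult)
  also have "v + \<omega> * ((norm (G x))\<^sup>2 + v) = \<omega> * (norm (G x))\<^sup>2 + (1 + \<omega>) * v"
    by (simp add: algebra_simps)
  finally show "second_moment (Pg \<Otimes>\<^sub>M Pu) (\<lambda>z. C (snd z) (g (fst z) x) - G x)
      \<le> ennreal (\<omega> * (norm (G x))\<^sup>2 + (1 + \<omega>) * v)" .
qed

lemma compressed_linear_image_noise:
  fixes C :: "'d \<Rightarrow> real^'n \<Rightarrow> real^'n" and T :: "real^'n \<Rightarrow> 'v::euclidean_space"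
  assumes C: "unbiased_compressor P C \<omega>" and "0 \<le> \<omega>"
    and T: "bounded_linear T" and T_bound: "\<And>u. norm (T u) \<le> L * norm u"
  shows "orthogonal_to_constants P (\<lambda>s. T (C s x) - T x)"
    and "second_moment P (\<lambda>s. T (C s x) - T x) \<le> ennreal (L\<^sup>2 * \<omega> * (norm x)\<^sup>2)"
proof -
  note [measurable] = unbiased_compressorD(2)[OF C]
  have [measurable]: "T \<in> borel_measurable borel"
    using T by (intro borel_measurable_continuous_onI linear_continuous_on)
  have "T (C s x) - T x = T (C s x - x)" for s
    using T by (simp add: linear_diff bounded_linear.linear)
  then have "second_moment P (\<lambda>s. T (C s x) - T x) \<le>
      (\<integral>\<^sup>+s. ennreal (L\<^sup>2) * ennreal ((norm (C s x - x))\<^sup>2) \<partial>P)"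
    using T_bound
    by (intro nn_integral_mono)
      (simp add: ennreal_mult[symmetric] power_mono flip: power_mult_distrib)
  also have "\<dots> = ennreal (L\<^sup>2) * second_moment P (\<lambda>s. C s x - x)"
    by (intro nn_integral_cmult) measurable
  also have "\<dots> \<le> ennreal (L\<^sup>2) * ennreal (\<omega> * (norm x)\<^sup>2)"
    using unbiased_compressorD(5)[OF C] by (rule mult_left_mono) auto
  also have "\<dots> = ennreal (L\<^sup>2 * \<omega> * (norm x)\<^sup>2)"
    using \<open>0 \<le> \<omega>\<close> by (simp add: ennreal_mult mult.assoc)
  finally show bound: "second_moment P (\<lambda>s. T (C s x) - T x) \<le> ennreal (L\<^sup>2 * \<omega> * (norm x)\<^sup>2)" .
  have "(\<integral>s. T (C s x) \<partial>P) = T x"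
    using integral_bounded_linear[OF T unbiased_compressorD(3)[OF C]] unbiased_compressorD(4)[OF C]
    by simp
  then show "orthogonal_to_constants P (\<lambda>s. T (C s x) - T x)"
    using orthogonal_to_constants_centered[of P "\<lambda>s. T (C s x)"] bound unbiased_compressorD(1)[OF C]
      integrable_bounded_linear[OF T unbiased_compressorD(3)[OF C]]
    by (simp add: le_less_trans)
qed

section \<open>Quadratic objectives\<close>

lemma GDERIV_unique:
  assumes "GDERIV f x :> D1" and "GDERIV f x :> D2"
  shows "D1 = D2"
proof -
  have "(\<lambda>h. inner h D1) = (\<lambda>h. inner h D2)"
    using assms unfolding gderiv_def by (rule has_derivative_unique)
  then have "inner (D1 - D2) D1 = inner (D1 - D2) D2" by metis
  then have "inner (D1 - D2) (D1 - D2) = 0" by (simp add: inner_diff_right)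
  then show ?thesis by simp
qed

lemma quadratic_gradient:
  fixes F :: "real^'n \<Rightarrow> real"
  assumes quad: "is_quadratic F A wst" and "GDERIV F x :> D"
  shows "D = A *v (x - wst)"
proof -
  have F_eq: "F = (\<lambda>y. F wst + 1/2 * ((y - wst) \<bullet> (A *v (y - wst))))"
    using quad unfolding is_quadratic_def by (auto simp: algebra_simps)
  have symmetric: "u \<bullet> (A *v h) = h \<bullet> (A *v u)" for u h
  proof -
    have "u \<bullet> (A *v h) = (u v* A) \<bullet> h" by (simp add: dot_lmul_matrix)
    also have "u v* A = A *v u"
      using quad transpose_matrix_vector[of A u] by (simp add: is_quadratic_def)
    finally show ?thesis by (simp add: inner_commute)
  qed
  have "((\<lambda>y. F wst + 1/2 * ((y - wst) \<bullet> (A *v (y - wst)))) has_derivative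
      (\<lambda>h. 1/2 * ((x - wst) \<bullet> (A *v h) + h \<bullet> (A *v (x - wst))))) (at x)"
    by (auto intro!: derivative_eq_intros
        bounded_linear.has_derivative[OF matrix_vector_mul_bounded_linear])
  then have "GDERIV F x :> A *v (x - wst)"
    unfolding gderiv_def F_eq[symmetric] symmetric by simp
  then show ?thesis using assms(2) GDERIV_unique by blast
qed

lemma quadratic_L_smooth_matrix_bound:
  fixes F :: "real^'n \<Rightarrow> real"
  assumes "is_quadratic F A wst" and "L_smooth F L"
  shows "norm (A *v u) \<le> L * norm u"
proof -
  obtain G where G: "\<And>x. GDERIV F x :> G x"
    and Lipschitz: "\<And>x y. norm (G x - G y) \<le> L * norm (x - y)"
    using assms(2) unfolding L_smooth_def by blast
  have "A *v u = G (u + wst) - G wst"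
    using quadratic_gradient[OF assms(1) G] by (simp add: matrix_vector_right_distrib)
  then show ?thesis using Lipschitz[of "u + wst" wst] by simp
qed

section \<open>One round of MCM and Rand-MCM\<close>

text \<open>Worker \<open>i\<close> owns the randomness \<open>\<xi> i\<close> = (downlink compression, sampling, uplink
  compression).  \<open>estimate j i \<xi>\<close> is the estimate of \<open>w\<close> that worker \<open>i\<close> rebuilds from its
  memory \<open>H i\<close> with the downlink compression drawn at index \<open>j\<close>: \<open>j = i\<close> for Rand-MCM and
  \<open>j = 0\<close>, one compression shared by all workers, for MCM.  \<open>message j i \<xi>\<close> is the compressed
  stochastic gradient that worker \<open>i\<close> then sends.\<close>
locale mcm_round =
  fixes N :: nat
    and Pd :: "nat \<Rightarrow> 'd measure" and Cd :: "nat \<Rightarrow> 'd \<Rightarrow> real^'n \<Rightarrow> real^'n"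
    and Pg :: "nat \<Rightarrow> 'g measure" and g :: "nat \<Rightarrow> 'g \<Rightarrow> real^'n \<Rightarrow> real^'n"
    and Pu :: "nat \<Rightarrow> 'u measure" and Cu :: "nat \<Rightarrow> 'u \<Rightarrow> real^'n \<Rightarrow> real^'n"
    and gradF :: "real^'n \<Rightarrow> real^'n" and A :: "real^'n^'n" and wst :: "real^'n"
    and L \<omega>up \<omega>dwn v :: real
    and w :: "real^'n" and H :: "nat \<Rightarrow> real^'n"
  assumes N_pos: "1 \<le> N"
    and downlink: "\<And>i. i < N \<Longrightarrow> unbiased_compressor (Pd i) (Cd i) \<omega>dwn"
    and uplink: "\<And>i. i < N \<Longrightarrow> unbiased_compressor (Pu i) (Cu i) \<omega>up"
    and sampling: "\<And>i. i < N \<Longrightarrow> stoch_oracle (Pg i) (g i) gradF v"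
    and gradF_eq: "\<And>x. gradF x = A *v (x - wst)"
    and A_bound: "\<And>u. norm (A *v u) \<le> L * norm u"
    and \<omega>up_nonneg: "0 \<le> \<omega>up" and \<omega>dwn_nonneg: "0 \<le> \<omega>dwn" and v_nonneg: "0 \<le> v"
begin

abbreviation \<Omega> :: "(nat \<Rightarrow> 'd \<times> 'g \<times> 'u) measure" where
  "\<Omega> \<equiv> PiM {..<N} (\<lambda>i. Pd i \<Otimes>\<^sub>M Pg i \<Otimes>\<^sub>M Pu i)"

abbreviation estimate :: "nat \<Rightarrow> nat \<Rightarrow> (nat \<Rightarrow> 'd \<times> 'g \<times> 'u) \<Rightarrow> real^'n" where
  "estimate j i \<xi> \<equiv> H i + Cd j (fst (\<xi> j)) (w - H i)"

abbreviation message :: "nat \<Rightarrow> nat \<Rightarrow> (nat \<Rightarrow> 'd \<times> 'g \<times> 'u) \<Rightarrow> real^'n" where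
  "message j i \<xi> \<equiv> Cu i (snd (snd (\<xi> i))) (g i (fst (snd (\<xi> i))) (estimate j i \<xi>))"

abbreviation uplink_error :: "nat \<Rightarrow> real^'n \<Rightarrow> 'g \<times> 'u \<Rightarrow> real^'n" where
  "uplink_error i x q \<equiv> Cu i (snd q) (g i (fst q) x) - gradF x"

lemma prob_space_downlink: "i < N \<Longrightarrow> prob_space (Pd i)"
  using unbiased_compressorD(1)[OF downlink] .

lemma prob_space_uplink: "i < N \<Longrightarrow> prob_space (Pg i \<Otimes>\<^sub>M Pu i)"
  using stoch_oracleD(1)[OF sampling] unbiased_compressorD(1)[OF uplink] by (rule prob_space_pair)

lemma prob_space_worker: "i < N \<Longrightarrow> prob_space (Pd i \<Otimes>\<^sub>M Pg i \<Otimes>\<^sub>M Pu i)"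
  using prob_space_downlink prob_space_uplink by (rule prob_space_pair)

lemma gradF_measurable[measurable]: "gradF \<in> borel_measurable borel"
proof -
  have [measurable]: "(\<lambda>x. A *v x) \<in> borel_measurable borel"
    by (intro borel_measurable_continuous_onI matrix_vector_mult_linear_continuous_on)
  have "gradF = (\<lambda>x. A *v (x - wst))" using gradF_eq by blast
  then show ?thesis by simp
qed

definition decoded :: "nat \<Rightarrow> real^'n \<Rightarrow> 'd \<Rightarrow> real^'n" where
  "decoded j h s = h + Cd j s (w - h)"

lemma decoded_measurable: "j < N \<Longrightarrow> decoded j h \<in> borel_measurable (Pd j)"
  using unbiased_compressorD(2)[OF downlink] unfolding decoded_def by measurable

lemma uplink_measurable:
  assumes "i < N" and [measurable]: "x \<in> borel_measurable M"
  shows "(\<lambda>(y, q). uplink_error i (x y) q)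
    \<in> borel_measurable (M \<Otimes>\<^sub>M Pg i \<Otimes>\<^sub>M Pu i)"
  using unbiased_compressorD(2)[OF uplink[OF assms(1)]] stoch_oracleD(2)[OF sampling[OF assms(1)]]
  by measurable

lemma downlink_gradient_noise:
  assumes "j < N"
  shows "orthogonal_to_constants (Pd j) (\<lambda>s. gradF (decoded j h s) - gradF w)"
    and "second_moment (Pd j) (\<lambda>s. gradF (decoded j h s) - gradF w)
      \<le> ennreal (L\<^sup>2 * \<omega>dwn * (norm (w - h))\<^sup>2)"
    and "second_moment (Pd j) (\<lambda>s. gradF (decoded j h s))
      \<le> ennreal ((norm (gradF w))\<^sup>2 + L\<^sup>2 * \<omega>dwn * (norm (w - h))\<^sup>2)"
proof -
  have diff: "gradF (decoded j h s) - gradF w = A *v Cd j s (w - h) - A *v (w - h)" for s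
    by (simp add: decoded_def gradF_eq matrix_vector_mult_diff_distrib matrix_vector_right_distrib)
  note noise = compressed_linear_image_noise[OF downlink[OF assms] \<omega>dwn_nonneg
      matrix_vector_mul_bounded_linear A_bound, of "w - h"]
  show orth: "orthogonal_to_constants (Pd j) (\<lambda>s. gradF (decoded j h s) - gradF w)"
    unfolding diff by (rule noise(1))
  show bound: "second_moment (Pd j) (\<lambda>s. gradF (decoded j h s) - gradF w)
      \<le> ennreal (L\<^sup>2 * \<omega>dwn * (norm (w - h))\<^sup>2)"
    unfolding diff by (rule noise(2))
  have "second_moment (Pd j) (\<lambda>s. gradF (decoded j h s)) =
      ennreal ((norm (gradF w))\<^sup>2) + second_moment (Pd j) (\<lambda>s. gradF (decoded j h s) - gradF w)"
    using orthogonal_to_constantsD[OF orth, of "gradF w"] by simp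
  also have "\<dots> \<le> ennreal ((norm (gradF w))\<^sup>2) + ennreal (L\<^sup>2 * \<omega>dwn * (norm (w - h))\<^sup>2)"
    using bound by (rule add_left_mono)
  finally show "second_moment (Pd j) (\<lambda>s. gradF (decoded j h s))
      \<le> ennreal ((norm (gradF w))\<^sup>2 + L\<^sup>2 * \<omega>dwn * (norm (w - h))\<^sup>2)"
    using \<omega>dwn_nonneg by simp
qed

lemma uplink_noise:
  assumes "i < N"
  shows "orthogonal_to_constants (Pg i \<Otimes>\<^sub>M Pu i) (uplink_error i x)"
    and "second_moment (Pg i \<Otimes>\<^sub>M Pu i) (uplink_error i x)
      \<le> ennreal (\<omega>up * (norm (gradF x))\<^sup>2 + (1 + \<omega>up) * v)"
  using compressed_oracle_noise[OF uplink[OF assms] sampling[OF assms] \<omega>up_nonneg v_nonneg] by auto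

lemma uplink_average_noise:
  "(\<Sum>i<N. second_moment (Pg i \<Otimes>\<^sub>M Pu i) (\<lambda>q. (1 / real N) *\<^sub>R uplink_error i x q))
    \<le> ennreal (\<omega>up / real N * (norm (gradF x))\<^sup>2 + (1 + \<omega>up) * v / real N)"
proof -
  define K where "K = \<omega>up * (norm (gradF x))\<^sup>2 + (1 + \<omega>up) * v"
  have "second_moment (Pg i \<Otimes>\<^sub>M Pu i) (\<lambda>q. (1 / real N) *\<^sub>R uplink_error i x q)
      \<le> ennreal ((1 / real N)\<^sup>2 * K)" if "i \<in> {..<N}" for i
  proof -
    have i: "i < N" using that by simp
    have "(uplink_error i x) \<in> borel_measurable (Pg i \<Otimes>\<^sub>M Pu i)"
      using measurable_Pair2[OF uplink_measurable[OF i, of "\<lambda>_. x" "count_space UNIV"], of undefined]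
      by simp
    then have "second_moment (Pg i \<Otimes>\<^sub>M Pu i) (\<lambda>q. (1 / real N) *\<^sub>R uplink_error i x q)
        = ennreal ((1 / real N)\<^sup>2) * second_moment (Pg i \<Otimes>\<^sub>M Pu i) (uplink_error i x)"
      by (rule second_moment_scaleR)
    also have "\<dots> \<le> ennreal ((1 / real N)\<^sup>2) * ennreal K"
      unfolding K_def by (rule mult_left_mono[OF uplink_noise(2)[OF i]]) simp
    finally show ?thesis by (simp add: ennreal_mult')
  qed
  then have "(\<Sum>i<N. second_moment (Pg i \<Otimes>\<^sub>M Pu i)
      (\<lambda>q. (1 / real N) *\<^sub>R uplink_error i x q))
    \<le> (\<Sum>i<N. ennreal ((1 / real N)\<^sup>2 * K))"
    by (rule sum_mono)
  also have "\<dots> = ennreal (real N * ((1 / real N)\<^sup>2 * K))"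
    by (simp add: ennreal_of_nat_eq_real_of_nat ennreal_mult')
  also have "real N * ((1 / real N)\<^sup>2 * K) =
      \<omega>up / real N * (norm (gradF x))\<^sup>2 + (1 + \<omega>up) * v / real N"
    using N_pos by (simp add: K_def field_simps power2_eq_square)
  finally show ?thesis .
qed

definition worker_deviation :: "real \<Rightarrow> nat \<Rightarrow> real^'n \<Rightarrow> 'd \<times> 'g \<times> 'u \<Rightarrow> real^'n" where
  "worker_deviation \<kappa> i h z =
    \<kappa> *\<^sub>R (gradF (decoded i h (fst z)) - gradF w) +
    uplink_error i (decoded i h (fst z)) (snd z)"

lemma worker_deviation_centered:
  assumes i: "i < N"
  shows "worker_deviation \<kappa> i h \<in> borel_measurable (Pd i \<Otimes>\<^sub>M Pg i \<Otimes>\<^sub>M Pu i)"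
    and "orthogonal_to_constants (Pd i \<Otimes>\<^sub>M Pg i \<Otimes>\<^sub>M Pu i) (worker_deviation \<kappa> i h)"
proof -
  note [measurable] = decoded_measurable[OF i] uplink_measurable[OF i decoded_measurable[OF i]]
  interpret Q: prob_space "Pg i \<Otimes>\<^sub>M Pu i" using prob_space_uplink[OF i] .
  have downlink_part: "orthogonal_to_constants (Pd i) (\<lambda>s. \<kappa> *\<^sub>R (gradF (decoded i h s) - gradF w))"
    using downlink_gradient_noise(1)[OF i]
    by (rule orthogonal_to_constants_scaleR[OF prob_space_downlink[OF i], rotated]) measurable
  show "worker_deviation \<kappa> i h \<in> borel_measurable (Pd i \<Otimes>\<^sub>M Pg i \<Otimes>\<^sub>M Pu i)"
    unfolding worker_deviation_def[abs_def] by measurable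
  show "orthogonal_to_constants (Pd i \<Otimes>\<^sub>M Pg i \<Otimes>\<^sub>M Pu i) (worker_deviation \<kappa> i h)"
    unfolding worker_deviation_def[abs_def]
    by (rule orthogonal_to_constants_pair[OF Q.sigma_finite_measure_axioms _ _
          downlink_part uplink_noise(1)[OF i]]) measurable
qed

lemma worker_deviation_second_moment:
  assumes i: "i < N"
  shows "second_moment (Pd i \<Otimes>\<^sub>M Pg i \<Otimes>\<^sub>M Pu i) (worker_deviation \<kappa> i h)
    \<le> ennreal (\<kappa>\<^sup>2 * (L\<^sup>2 * \<omega>dwn * (norm (w - h))\<^sup>2) +
        (\<omega>up * ((norm (gradF w))\<^sup>2 + L\<^sup>2 * \<omega>dwn * (norm (w - h))\<^sup>2) + (1 + \<omega>up) * v))"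
proof -
  note [measurable] = decoded_measurable[OF i] uplink_measurable[OF i decoded_measurable[OF i]]
  interpret Pd: prob_space "Pd i" using prob_space_downlink[OF i] .
  interpret Q: prob_space "Pg i \<Otimes>\<^sub>M Pu i" using prob_space_uplink[OF i] .
  define \<delta> where "\<delta> = L\<^sup>2 * \<omega>dwn * (norm (w - h))\<^sup>2"
  have "second_moment (Pd i \<Otimes>\<^sub>M Pg i \<Otimes>\<^sub>M Pu i) (worker_deviation \<kappa> i h) =
      second_moment (Pd i) (\<lambda>s. \<kappa> *\<^sub>R (gradF (decoded i h s) - gradF w)) +
      (\<integral>\<^sup>+s. second_moment (Pg i \<Otimes>\<^sub>M Pu i)
        (uplink_error i (decoded i h s)) \<partial>Pd i)"
    unfolding worker_deviation_def
    by (rule second_moment_add_conditionally_centered[OF Q.sigma_finite_measure_axioms _ _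
          uplink_noise(1)[OF i]]) measurable
  also have "\<dots> \<le> ennreal (\<kappa>\<^sup>2) * ennreal \<delta> +
      (\<integral>\<^sup>+s. ennreal (\<omega>up * (norm (gradF (decoded i h s)))\<^sup>2 + (1 + \<omega>up) * v) \<partial>Pd i)"
    using downlink_gradient_noise(2)[OF i, of h] uplink_noise(2)[OF i]
    by (intro add_mono nn_integral_mono)
      (simp_all add: second_moment_scaleR \<delta>_def mult_left_mono del: norm_scaleR)
  also have "\<dots> \<le> ennreal (\<kappa>\<^sup>2 * \<delta>) + ennreal (\<omega>up * ((norm (gradF w))\<^sup>2 + \<delta>) + (1 + \<omega>up) * v)"
    using downlink_gradient_noise(3)[OF i, of h] \<omega>up_nonneg v_nonneg \<omega>dwn_nonneg
    by (intro add_mono Pd.nn_integral_affine_le) (auto simp: \<delta>_def ennreal_mult)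
  finally show ?thesis
    using \<omega>up_nonneg v_nonneg \<omega>dwn_nonneg by (simp add: \<delta>_def)
qed

text \<open>In the following, \<open>\<kappa> = 0\<close> gives the averaged uplink noise and \<open>\<kappa> = 1\<close> the averaged
  update of the algorithm.\<close>

lemma rand_mcm_second_moment_eq:
  "second_moment \<Omega> (\<lambda>\<xi>. (1 / real N) *\<^sub>R
      (\<Sum>i<N. \<kappa> *\<^sub>R gradF (estimate i i \<xi>) + (message i i \<xi> - gradF (estimate i i \<xi>))))
   = ennreal ((norm (\<kappa> *\<^sub>R gradF w))\<^sup>2) +
     (\<Sum>i<N. second_moment (Pd i \<Otimes>\<^sub>M Pg i \<Otimes>\<^sub>M Pu i)
        (\<lambda>z. (1 / real N) *\<^sub>R worker_deviation \<kappa> i (H i) z))"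
proof -
  have "(1 / real N) *\<^sub>R
      (\<Sum>i<N. \<kappa> *\<^sub>R gradF (estimate i i \<xi>) + (message i i \<xi> - gradF (estimate i i \<xi>)))
    = \<kappa> *\<^sub>R gradF w + (\<Sum>i<N. (1 / real N) *\<^sub>R worker_deviation \<kappa> i (H i) (\<xi> i))" for \<xi>
  proof -
    have "worker_deviation \<kappa> i (H i) (\<xi> i) =
        (\<kappa> *\<^sub>R gradF (estimate i i \<xi>) + (message i i \<xi> - gradF (estimate i i \<xi>)))
        - \<kappa> *\<^sub>R gradF w" for i
      by (simp add: worker_deviation_def decoded_def algebra_simps)
    then have "(\<Sum>i<N. (1 / real N) *\<^sub>R worker_deviation \<kappa> i (H i) (\<xi> i)) =
        (1 / real N) *\<^sub>R
          (\<Sum>i<N. \<kappa> *\<^sub>R gradF (estimate i i \<xi>) + (message i i \<xi> - gradF (estimate i i \<xi>)))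
        - (real N / real N) *\<^sub>R (\<kappa> *\<^sub>R gradF w)"
      by (simp add: scaleR_diff_right sum_subtractf scaleR_sum_right sum_constant_scaleR
          del: sum_constant)
    then show ?thesis using N_pos by simp
  qed
  moreover have "second_moment \<Omega>
      (\<lambda>\<xi>. \<kappa> *\<^sub>R gradF w + (\<Sum>i<N. (1 / real N) *\<^sub>R worker_deviation \<kappa> i (H i) (\<xi> i)))
    = ennreal ((norm (\<kappa> *\<^sub>R gradF w))\<^sup>2) +
      (\<Sum>i<N. second_moment (Pd i \<Otimes>\<^sub>M Pg i \<Otimes>\<^sub>M Pu i)
        (\<lambda>z. (1 / real N) *\<^sub>R worker_deviation \<kappa> i (H i) z))"
  proof (rule second_moment_sum_PiM)
    fix i assume "i \<in> {..<N}"
    then have i: "i < N" by simp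
    note [measurable] = worker_deviation_centered(1)[OF i]
    show "prob_space (Pd i \<Otimes>\<^sub>M Pg i \<Otimes>\<^sub>M Pu i)" by (rule prob_space_worker[OF i])
    show "(\<lambda>z. (1 / real N) *\<^sub>R worker_deviation \<kappa> i (H i) z)
        \<in> borel_measurable (Pd i \<Otimes>\<^sub>M Pg i \<Otimes>\<^sub>M Pu i)"
      by measurable
    show "orthogonal_to_constants (Pd i \<Otimes>\<^sub>M Pg i \<Otimes>\<^sub>M Pu i)
        (\<lambda>z. (1 / real N) *\<^sub>R worker_deviation \<kappa> i (H i) z)"
      by (rule orthogonal_to_constants_scaleR[OF prob_space_worker[OF i]
            worker_deviation_centered[OF i]])
  qed simp
  ultimately show ?thesis by simp
qed

lemma rand_mcm_second_moment:
  "second_moment \<Omega> (\<lambda>\<xi>. (1 / real N) *\<^sub>R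
      (\<Sum>i<N. \<kappa> *\<^sub>R gradF (estimate i i \<xi>) + (message i i \<xi> - gradF (estimate i i \<xi>))))
   \<le> ennreal ((\<kappa>\<^sup>2 + \<omega>up / real N) * (norm (gradF w))\<^sup>2 + (1 + \<omega>up) * v / real N
       + L\<^sup>2 * \<omega>dwn * (\<kappa>\<^sup>2 / real N + \<omega>up / real N) * (1 / real N * (\<Sum>i<N. (norm (w - H i))\<^sup>2)))"
proof -
  define b where "b i = \<kappa>\<^sup>2 * (L\<^sup>2 * \<omega>dwn * (norm (w - H i))\<^sup>2) +
    (\<omega>up * ((norm (gradF w))\<^sup>2 + L\<^sup>2 * \<omega>dwn * (norm (w - H i))\<^sup>2) + (1 + \<omega>up) * v)" for i
  have "second_moment (Pd i \<Otimes>\<^sub>M Pg i \<Otimes>\<^sub>M Pu i) (\<lambda>z. (1 / real N) *\<^sub>R worker_deviation \<kappa> i (H i) z)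
      \<le> ennreal ((1 / real N)\<^sup>2 * b i)" if "i \<in> {..<N}" for i
    using that worker_deviation_second_moment[of i \<kappa> "H i"]
    by (simp add: second_moment_scaleR[OF worker_deviation_centered(1)] ennreal_mult' b_def
        mult_left_mono del: norm_scaleR)
  then have "second_moment \<Omega> (\<lambda>\<xi>. (1 / real N) *\<^sub>R
      (\<Sum>i<N. \<kappa> *\<^sub>R gradF (estimate i i \<xi>) + (message i i \<xi> - gradF (estimate i i \<xi>))))
    \<le> ennreal (\<kappa>\<^sup>2 * (norm (gradF w))\<^sup>2) + (\<Sum>i<N. ennreal ((1 / real N)\<^sup>2 * b i))"
    unfolding rand_mcm_second_moment_eq by (intro add_mono sum_mono) (simp_all add: power_mult_distrib)
  also have "\<dots> = ennreal (\<kappa>\<^sup>2 * (norm (gradF w))\<^sup>2 + (\<Sum>i<N. (1 / real N)\<^sup>2 * b i))"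
    using \<omega>up_nonneg \<omega>dwn_nonneg v_nonneg by (simp add: b_def sum_nonneg)
  also have "\<kappa>\<^sup>2 * (norm (gradF w))\<^sup>2 + (\<Sum>i<N. (1 / real N)\<^sup>2 * b i)
    = (\<kappa>\<^sup>2 + \<omega>up / real N) * (norm (gradF w))\<^sup>2 + (1 + \<omega>up) * v / real N
       + L\<^sup>2 * \<omega>dwn * (\<kappa>\<^sup>2 / real N + \<omega>up / real N) * (1 / real N * (\<Sum>i<N. (norm (w - H i))\<^sup>2))"
  proof -
    have "(\<Sum>i<N. (1 / real N)\<^sup>2 * b i) = (1 / real N)\<^sup>2 * ((\<kappa>\<^sup>2 + \<omega>up) * (L\<^sup>2 * \<omega>dwn) *
        (\<Sum>i<N. (norm (w - H i))\<^sup>2) + real N * (\<omega>up * (norm (gradF w))\<^sup>2 + (1 + \<omega>up) * v))"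
      by (simp add: b_def sum.distrib algebra_simps flip: sum_distrib_left sum_distrib_right)
    then show ?thesis using N_pos by (simp add: field_simps power2_eq_square)
  qed
  finally show ?thesis .
qed

lemma mcm_second_moment_eq:
  assumes shared_memory: "\<And>i. i < N \<Longrightarrow> H i = H 0"
  shows "second_moment \<Omega> (\<lambda>\<xi>. (1 / real N) *\<^sub>R
      (\<Sum>i<N. \<kappa> *\<^sub>R gradF (estimate 0 i \<xi>) + (message 0 i \<xi> - gradF (estimate 0 i \<xi>))))
   = (\<integral>\<^sup>+s. ennreal ((norm (\<kappa> *\<^sub>R gradF (decoded 0 (H 0) s)))\<^sup>2) +
      (\<Sum>i<N. second_moment (Pg i \<Otimes>\<^sub>M Pu i) (\<lambda>q. (1 / real N) *\<^sub>R uplink_error i (decoded 0 (H 0) s) q))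
      \<partial>Pd 0)"
proof -
  have N0: "0 < N" using N_pos by simp
  note [measurable] = decoded_measurable[OF N0]
  define Y where "Y i s q =
    (1 / real N) *\<^sub>R uplink_error i (decoded 0 (H 0) s) q" for i s q
  have "(1 / real N) *\<^sub>R
      (\<Sum>i<N. \<kappa> *\<^sub>R gradF (estimate 0 i \<xi>) + (message 0 i \<xi> - gradF (estimate 0 i \<xi>)))
    = \<kappa> *\<^sub>R gradF (decoded 0 (H 0) (fst (\<xi> 0))) + (\<Sum>i<N. Y i (fst (\<xi> 0)) (snd (\<xi> i)))" for \<xi>
  proof -
    have "\<kappa> *\<^sub>R gradF (estimate 0 i \<xi>) + (message 0 i \<xi> - gradF (estimate 0 i \<xi>))
        = \<kappa> *\<^sub>R gradF (decoded 0 (H 0) (fst (\<xi> 0))) + real N *\<^sub>R Y i (fst (\<xi> 0)) (snd (\<xi> i))"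
      if "i < N" for i
      using N_pos shared_memory[OF that] by (simp add: Y_def decoded_def)
    then have "(\<Sum>i<N. \<kappa> *\<^sub>R gradF (estimate 0 i \<xi>) + (message 0 i \<xi> - gradF (estimate 0 i \<xi>)))
        = real N *\<^sub>R (\<kappa> *\<^sub>R gradF (decoded 0 (H 0) (fst (\<xi> 0))) + (\<Sum>i<N. Y i (fst (\<xi> 0)) (snd (\<xi> i))))"
      by (simp add: sum.distrib scaleR_add_right scaleR_sum_right sum_constant_scaleR
          del: sum_constant)
    then show ?thesis using N_pos by simp
  qed
  moreover have "second_moment \<Omega> (\<lambda>\<xi>. \<kappa> *\<^sub>R gradF (decoded 0 (H 0) (fst (\<xi> 0))) +
      (\<Sum>i<N. Y i (fst (\<xi> 0)) (snd (\<xi> i))))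
    = (\<integral>\<^sup>+s. ennreal ((norm (\<kappa> *\<^sub>R gradF (decoded 0 (H 0) s)))\<^sup>2) +
      (\<Sum>i<N. second_moment (Pg i \<Otimes>\<^sub>M Pu i) (Y i s)) \<partial>Pd 0)"
  proof (rule second_moment_sum_PiM_shared[where D = Pd and Q = "\<lambda>i. Pg i \<Otimes>\<^sub>M Pu i"])
    fix i assume "i \<in> {..<N}"
    then have i: "i < N" by simp
    note [measurable] = uplink_measurable[OF i decoded_measurable[OF N0]]
    show "case_prod (Y i) \<in> borel_measurable (Pd 0 \<Otimes>\<^sub>M Pg i \<Otimes>\<^sub>M Pu i)"
      unfolding Y_def by measurable
    show "orthogonal_to_constants (Pg i \<Otimes>\<^sub>M Pu i) (Y i s)" for s
      unfolding Y_def
      using measurable_Pair2[OF uplink_measurable[OF i, of "\<lambda>_. decoded 0 (H 0) s" "count_space UNIV"]]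
      by (intro orthogonal_to_constants_scaleR[OF prob_space_uplink[OF i] _ uplink_noise(1)[OF i]])
        simp
  qed (use N0 prob_space_downlink prob_space_uplink in auto)
  ultimately show ?thesis unfolding Y_def by simp
qed

lemma mcm_second_moment:
  assumes shared_memory: "\<And>i. i < N \<Longrightarrow> H i = H 0"
  shows "second_moment \<Omega> (\<lambda>\<xi>. (1 / real N) *\<^sub>R
      (\<Sum>i<N. \<kappa> *\<^sub>R gradF (estimate 0 i \<xi>) + (message 0 i \<xi> - gradF (estimate 0 i \<xi>))))
   \<le> ennreal ((\<kappa>\<^sup>2 + \<omega>up / real N) * (norm (gradF w))\<^sup>2 + (1 + \<omega>up) * v / real N
       + L\<^sup>2 * \<omega>dwn * (\<kappa>\<^sup>2 + \<omega>up / real N) * (1 / real N * (\<Sum>i<N. (norm (w - H i))\<^sup>2)))"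
proof -
  have N0: "0 < N" using N_pos by simp
  note [measurable] = decoded_measurable[OF N0]
  interpret Pd0: prob_space "Pd 0" using prob_space_downlink[OF N0] .
  let ?G = "\<lambda>s. (norm (gradF (decoded 0 (H 0) s)))\<^sup>2"
  note mcm_second_moment_eq[OF shared_memory, of \<kappa>]
  also have "(\<integral>\<^sup>+s. ennreal ((norm (\<kappa> *\<^sub>R gradF (decoded 0 (H 0) s)))\<^sup>2) +
      (\<Sum>i<N. second_moment (Pg i \<Otimes>\<^sub>M Pu i) (\<lambda>q. (1 / real N) *\<^sub>R uplink_error i (decoded 0 (H 0) s) q))
      \<partial>Pd 0)
    \<le> (\<integral>\<^sup>+s. ennreal (\<kappa>\<^sup>2 * ?G s) + ennreal (\<omega>up / real N * ?G s + (1 + \<omega>up) * v / real N) \<partial>Pd 0)"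
    by (intro nn_integral_mono add_mono uplink_average_noise) (simp add: power_mult_distrib)
  also have "\<dots> = (\<integral>\<^sup>+s. ennreal ((\<kappa>\<^sup>2 + \<omega>up / real N) * ?G s + (1 + \<omega>up) * v / real N) \<partial>Pd 0)"
    using \<omega>up_nonneg v_nonneg
    by (intro nn_integral_cong) (simp add: algebra_simps flip: ennreal_plus)
  also have "\<dots> \<le> ennreal ((\<kappa>\<^sup>2 + \<omega>up / real N) *
      ((norm (gradF w))\<^sup>2 + L\<^sup>2 * \<omega>dwn * (norm (w - H 0))\<^sup>2) + (1 + \<omega>up) * v / real N)"
    using downlink_gradient_noise(3)[OF N0, of "H 0"] \<omega>up_nonneg v_nonneg \<omega>dwn_nonneg
    by (intro Pd0.nn_integral_affine_le) auto
  also have "1 / real N * (\<Sum>i<N. (norm (w - H i))\<^sup>2) = (norm (w - H 0))\<^sup>2"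
  proof -
    have "(\<Sum>i<N. (norm (w - H i))\<^sup>2) = (\<Sum>i<N. (norm (w - H 0))\<^sup>2)"
      by (intro sum.cong refl) (metis lessThan_iff shared_memory)
    then show ?thesis using N_pos by simp
  qed
  ultimately show ?thesis by (simp add: algebra_simps)
qed

end

theorem mainTheorem11:
  fixes F :: "real^'n \<Rightarrow> real" and gradF :: "real^'n \<Rightarrow> real^'n"
    and A :: "real^'n^'n" and wst :: "real^'n"
    and L \<sigma> \<omega>up \<omega>dwn :: real and N b :: nat
    and alg :: variant
    and Pd :: "nat \<Rightarrow> 'd measure" and Cd :: "nat \<Rightarrow> 'd \<Rightarrow> real^'n \<Rightarrow> real^'n"
    and Pg :: "nat \<Rightarrow> 'g measure" and g :: "nat \<Rightarrow> 'g \<Rightarrow> real^'n \<Rightarrow> real^'n"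
    and Pu :: "nat \<Rightarrow> 'u measure" and Cu :: "nat \<Rightarrow> 'u \<Rightarrow> real^'n \<Rightarrow> real^'n"
    and w :: "real^'n" and H :: "nat \<Rightarrow> real^'n"
  assumes N_pos: "N \<ge> 1" and b_pos: "b \<ge> 1"
    and quad: "is_quadratic F A wst"
    and grad: "\<forall>x. GDERIV F x :> gradF x"
    and A2: "L_smooth F L"
    and om_up: "\<omega>up > 0" and om_dwn: "\<omega>dwn > 0"
    and A1_dwn: "\<forall>i<N. unbiased_compressor (Pd i) (Cd i) \<omega>dwn"
    and A1_up: "\<forall>i<N. unbiased_compressor (Pu i) (Cu i) \<omega>up"
    and A4: "\<forall>i<N. stoch_oracle (Pg i) (g i) gradF (\<sigma>\<^sup>2 / real b)"
    and shared_mem: "alg = MCM \<Longrightarrow> \<forall>i<N. H i = H 0"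
  shows "let \<Omega> = PiM {..<N} (\<lambda>i. Pd i \<Otimes>\<^sub>M Pg i \<Otimes>\<^sub>M Pu i);
             dsel = (\<lambda>i::nat. if alg = MCM then 0 else i);
             what = (\<lambda>i \<xi>. H i + Cd (dsel i) (fst (\<xi> (dsel i))) (w - H i));
             up = (\<lambda>i \<xi>. Cu i (snd (snd (\<xi> i))) (g i (fst (snd (\<xi> i))) (what i \<xi>)));
             C = (if alg = MCM then 1 else real N);
             D = (1 / real N) * (\<Sum>i<N. (norm (w - H i))\<^sup>2)
         in (\<integral>\<^sup>+\<xi>. ennreal ((norm ((1 / real N) *\<^sub>R (\<Sum>i<N. up i \<xi> - gradF (what i \<xi>))))\<^sup>2) \<partial>\<Omega>)
              \<le> ennreal (\<omega>up / real N * (norm (gradF w))\<^sup>2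
                        + \<sigma>\<^sup>2 * (1 + \<omega>up) / (real N * real b)
                        + \<omega>up * \<omega>dwn * L\<^sup>2 / real N * D)
          \<and> (\<integral>\<^sup>+\<xi>. ennreal ((norm ((1 / real N) *\<^sub>R (\<Sum>i<N. up i \<xi>)))\<^sup>2) \<partial>\<Omega>)
              \<le> ennreal ((1 + \<omega>up / real N) * (norm (gradF w))\<^sup>2
                        + \<sigma>\<^sup>2 * (1 + \<omega>up) / (real N * real b)
                        + L\<^sup>2 * \<omega>dwn * (1 / C + \<omega>up / real N) * D)"
proof -
  have gradF_eq: "gradF x = A *v (x - wst)" for x
    using quadratic_gradient[OF quad] grad by blast
  interpret mcm_round N Pd Cd Pg g Pu Cu gradF A wst L \<omega>up \<omega>dwn "\<sigma>\<^sup>2 / real b" w H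
    using N_pos A1_dwn A1_up A4 gradF_eq quadratic_L_smooth_matrix_bound[OF quad A2] om_up om_dwn
    by unfold_locales auto
  show ?thesis
  proof (cases alg)
    case MCM
    note shared = shared_mem[OF MCM, rule_format]
    show ?thesis
      using mcm_second_moment[OF shared, of 0] mcm_second_moment[OF shared, of 1] MCM
      by (simp add: Let_def mult_ac)
  next
    case Rand_MCM
    show ?thesis
      using rand_mcm_second_moment[of 0] rand_mcm_second_moment[of 1] Rand_MCM
      by (simp add: Let_def mult_ac)
  qed
qed

end
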